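(* Let $\Omega$ be a finite-dimensional real Euclidean space and $f_1,\dots,f_N\colon\Omega\to\mathbb{R}$ continuous convex functions (not assumed strongly convex) such that $E=\frac1N\sum_{j=1}^N f_j$ is coercive, and let $\theta^*$ be a minimizer of $E$. For $\alpha>0$ let $f_j^\alpha(\theta)=f_j(\theta)+\frac\alpha2\|\theta\|^2$ and $E^\alpha=\frac1N\sum_j f_j^\alpha$. Run DualFL (described in the context) on the functions $f_1^\alpha,\dots,f_N^\alpha$ with hyperparameters $\rho=0$ and $\nu=\alpha$, and suppose that for some $\gamma>0$ the local iterates satisfy $\Gamma^{n,j}(\theta_j^{(n+1)})\le\frac{1}{N\nu(n+1)^{4+\gamma}}$ for all $1\le j\le N$, $n\ge0$. Then the generated sequence $\{\theta^{(n)}\}$ (which depends on $\alpha$) satisfies \[ E(\theta^{(n)})-E(\theta^* )\to0\quad\text{as } n\to\infty \text{ and } \alpha\to0^+ . \]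
   Context: $h^*$ denotes the Legendre--Fenchel conjugate. DualFL applied to convex functions $\tilde f_1,\dots,\tilde f_N$ (here $\tilde f_j=f_j^\alpha$) with hyperparameters $\rho\ge0$, $\nu>0$: set $\theta^{(0)}=\theta_j^{(0)}=0$, $\zeta_j^{(0)}=\zeta_j^{(-1)}=0$, $t_0=1$. For $n=0,1,\dots$: each client $j$ computes an approximate minimizer $\theta_j^{(n+1)}$ of $E^{n,j}(\theta)=\tilde f_j(\theta)-\nu\langle\zeta_j^{(n)},\theta\rangle$; $\theta^{(n+1)}=\frac1N\sum_j\theta_j^{(n+1)}$; $t_{n+1}=\frac{1-\rho t_n^2+\sqrt{(1-\rho t_n^2)^2+4t_n^2}}{2}$, $\beta_n=\frac{t_n-1}{t_{n+1}}\cdot\frac{1-t_{n+1}\rho}{1-\rho}$; $\zeta_j^{(n+1)}=(1+\beta_n)(\zeta_j^{(n)}+\theta^{(n+1)}-\theta_j^{(n+1)})-\beta_n(\zeta_j^{(n-1)}+\theta^{(n)}-\theta_j^{(n)})$. Primal-dual gap: $g_j=\tilde f_j-\frac\nu2\|\cdot\|^2$, $E^{n,j}_{\mathrm d}(\xi)=g_j^*(\xi)+\frac1{2\nu}\|\xi-\nu\zeta_j^{(n)}\|^2$, $\Gamma^{n,j}(\theta)=E^{n,j}(\theta)+E^{n,j}_{\mathrm d}(\nu(\zeta_j^{(n)}-\theta))$. *)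

theory Defs
  imports "HOL-Analysis.Analysis"
begin

text \<open>Legendre--Fenchel conjugate, valued in the extended reals (it may be +infinity).\<close>
definition fconj :: "('a::real_inner \<Rightarrow> real) \<Rightarrow> 'a \<Rightarrow> ereal" where
  "fconj h \<xi> = (SUP \<theta>. ereal (inner \<xi> \<theta> - h \<theta>))"

definition avg_obj :: "nat \<Rightarrow> (nat \<Rightarrow> 'a \<Rightarrow> real) \<Rightarrow> 'a \<Rightarrow> real" where
  "avg_obj N f \<theta> = (1 / real N) * (\<Sum>j\<in>{1..N}. f j \<theta>)"

definition regul :: "real \<Rightarrow> ('a::real_normed_vector \<Rightarrow> real) \<Rightarrow> 'a \<Rightarrow> real" where
  "regul \<alpha> g \<theta> = g \<theta> + \<alpha> / 2 * (norm \<theta>)\<^sup>2"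

primrec dualfl_t :: "real \<Rightarrow> nat \<Rightarrow> real" where
  "dualfl_t \<rho> 0 = 1"
| "dualfl_t \<rho> (Suc n) =
     (1 - \<rho> * (dualfl_t \<rho> n)\<^sup>2 + sqrt ((1 - \<rho> * (dualfl_t \<rho> n)\<^sup>2)\<^sup>2 + 4 * (dualfl_t \<rho> n)\<^sup>2)) / 2"

definition dualfl_beta :: "real \<Rightarrow> nat \<Rightarrow> real" where
  "dualfl_beta \<rho> n = (dualfl_t \<rho> n - 1) / dualfl_t \<rho> (Suc n)
                       * ((1 - dualfl_t \<rho> (Suc n) * \<rho>) / (1 - \<rho>))"

text \<open>Server average theta^(n) = (1/N) sum_j theta_j^(n); here th n j = theta_j^(n).\<close>
definition dualfl_avg :: "nat \<Rightarrow> (nat \<Rightarrow> nat \<Rightarrow> 'a::real_vector) \<Rightarrow> nat \<Rightarrow> 'a" where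
  "dualfl_avg N th n = (1 / real N) *\<^sub>R (\<Sum>j\<in>{1..N}. th n j)"

text \<open>Dual variables zeta_j^(n) (with zeta_j^(0) = zeta_j^(-1) = 0).\<close>
fun dualfl_zeta :: "real \<Rightarrow> nat \<Rightarrow> (nat \<Rightarrow> nat \<Rightarrow> 'a::real_vector) \<Rightarrow> nat \<Rightarrow> nat \<Rightarrow> 'a" where
  "dualfl_zeta \<rho> N th j 0 = 0"
| "dualfl_zeta \<rho> N th j (Suc 0) =
     (1 + dualfl_beta \<rho> 0) *\<^sub>R (0 + dualfl_avg N th 1 - th 1 j)
     - dualfl_beta \<rho> 0 *\<^sub>R (0 + dualfl_avg N th 0 - th 0 j)"
| "dualfl_zeta \<rho> N th j (Suc (Suc n)) =
     (1 + dualfl_beta \<rho> (Suc n)) *\<^sub>R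
        (dualfl_zeta \<rho> N th j (Suc n) + dualfl_avg N th (Suc (Suc n)) - th (Suc (Suc n)) j)
     - dualfl_beta \<rho> (Suc n) *\<^sub>R
        (dualfl_zeta \<rho> N th j n + dualfl_avg N th (Suc n) - th (Suc n) j)"

text \<open>Local primal energy E^{n,j}, local dual energy E_d^{n,j}, and primal-dual gap Gamma^{n,j};
  F is the (tilde) local function, z = zeta_j^(n).\<close>
definition dualfl_local :: "('a::real_inner \<Rightarrow> real) \<Rightarrow> real \<Rightarrow> 'a \<Rightarrow> 'a \<Rightarrow> real" where
  "dualfl_local F \<nu> z \<theta> = F \<theta> - \<nu> * inner z \<theta>"

definition dualfl_dual :: "('a::real_inner \<Rightarrow> real) \<Rightarrow> real \<Rightarrow> 'a \<Rightarrow> 'a \<Rightarrow> ereal" where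
  "dualfl_dual F \<nu> z \<xi> =
     fconj (\<lambda>x. F x - \<nu> / 2 * (norm x)\<^sup>2) \<xi> + ereal (1 / (2 * \<nu>) * (norm (\<xi> - \<nu> *\<^sub>R z))\<^sup>2)"

definition dualfl_gap :: "('a::real_inner \<Rightarrow> real) \<Rightarrow> real \<Rightarrow> 'a \<Rightarrow> 'a \<Rightarrow> ereal" where
  "dualfl_gap F \<nu> z \<theta> = ereal (dualfl_local F \<nu> z \<theta>) + dualfl_dual F \<nu> z (\<nu> *\<^sub>R (z - \<theta>))"

end

theory Submission
  imports Defs
begin

text \<open>With \<open>\<rho> = 0\<close>, DualFL is an inexact FISTA applied to the dual problem: minimise
  \<open>\<Sum>j. (F\<^sub>j / \<nu>)\<^sup>*(\<zeta>\<^sub>j)\<close> subject to \<open>\<Sum>j. \<zeta>\<^sub>j = 0\<close>, where \<open>F\<^sub>j = f\<^sub>j\<^sup>\<alpha>\<close> and \<open>\<nu> = \<alpha>\<close>. The gap bound turns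
  each local solve into a quadratic minorant of \<open>F\<^sub>j\<close> at the new iterate, so a server round is an
  inexact proximal gradient step, and the usual FISTA Lyapunov function grows by at most
  \<open>t\<^sub>n\<^sup>2 \<delta>\<^sub>n\<close> per round, which is summable. Since the dual energy is coercive (each \<open>F\<^sub>j\<close> is
  bounded on the unit ball), the dual iterates stay bounded and their successive differences are
  \<open>O(1/n)\<close>. The disagreements between the local iterates and their average are combinations of these
  differences, so they tend to zero. Summing the minorants over the clients cancels the dual
  variables, so \<open>E\<^sup>\<alpha>\<close> at the server iterates is eventually at most \<open>E\<^sup>\<alpha>(u) + \<eta>\<close> for every \<open>u\<close>
  and \<open>\<eta> > 0\<close>; finally \<open>E\<^sup>\<alpha> = E + \<alpha>/2 norm\<^sup>2\<close>.\<close>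

lemma dualfl_gap_le_imp_minorant:
  fixes F :: "'a::real_inner \<Rightarrow> real"
  assumes gap: "dualfl_gap F \<nu> z \<theta> \<le> ereal d" and nu: "\<nu> > 0"
  shows "F \<theta> + \<nu> * inner z (u - \<theta>) + \<nu> / 2 * (norm (u - \<theta>))\<^sup>2 - d \<le> F u"
proof -
  define \<xi> where "\<xi> = \<nu> *\<^sub>R (z - \<theta>)"
  define h where "h = (\<lambda>x. F x - \<nu> / 2 * (norm x)\<^sup>2)"
  define q where "q = 1 / (2 * \<nu>) * (norm (\<xi> - \<nu> *\<^sub>R z))\<^sup>2"
  have "ereal (inner \<xi> u - h u) \<le> fconj h \<xi>"
    unfolding fconj_def by (rule SUP_upper) auto
  then have "ereal (dualfl_local F \<nu> z \<theta>) + (ereal (inner \<xi> u - h u) + ereal q) \<le> dualfl_gap F \<nu> z \<theta>"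
    unfolding dualfl_gap_def dualfl_dual_def \<xi>_def[symmetric] h_def[symmetric] q_def[symmetric]
    by (intro add_mono order_refl)
  also have "\<dots> \<le> ereal d" by (fact gap)
  finally have Fenchel_Young: "dualfl_local F \<nu> z \<theta> + (inner \<xi> u - h u + q) \<le> d" by simp
  have q: "q = \<nu> / 2 * (norm \<theta>)\<^sup>2"
    unfolding q_def \<xi>_def using nu by (simp add: algebra_simps power2_eq_square)
  have sq: "(norm (u - \<theta>))\<^sup>2 = (norm u)\<^sup>2 - 2 * inner u \<theta> + (norm \<theta>)\<^sup>2"
    by (simp add: power2_norm_eq_inner inner_diff_left inner_diff_right inner_commute)
  show ?thesis using Fenchel_Young unfolding q dualfl_local_def h_def \<xi>_def sq
    by (simp add: algebra_simps inner_diff_left inner_diff_right inner_commute)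
qed

section \<open>Momentum parameters for \<open>\<rho> = 0\<close>\<close>

lemma dualfl_t_0_Suc: "dualfl_t 0 (Suc n) = (1 + sqrt (1 + 4 * (dualfl_t 0 n)\<^sup>2)) / 2"
  by simp

declare dualfl_t.simps(2)[simp del]

lemma dualfl_t_0_ge_1: "1 \<le> dualfl_t 0 n"
proof (induction n)
  case (Suc n)
  have "1 \<le> sqrt (1 + 4 * (dualfl_t 0 n)\<^sup>2)" by simp
  then show ?case unfolding dualfl_t_0_Suc by simp
qed simp

lemma dualfl_t_0_Suc_ge: "dualfl_t 0 n + 1 / 2 \<le> dualfl_t 0 (Suc n)"
proof -
  let ?t = "dualfl_t 0 n"
  have "2 * ?t = sqrt ((2 * ?t)\<^sup>2)" using dualfl_t_0_ge_1[of n] by (simp only: real_sqrt_abs)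
  also have "\<dots> \<le> sqrt (1 + 4 * ?t\<^sup>2)" by (simp add: power2_eq_square)
  finally show ?thesis unfolding dualfl_t_0_Suc by simp
qed

lemma dualfl_t_0_Suc_le: "dualfl_t 0 (Suc n) \<le> dualfl_t 0 n + 1"
proof -
  let ?t = "dualfl_t 0 n"
  have "sqrt (1 + 4 * ?t\<^sup>2) \<le> sqrt ((2 * ?t + 1)\<^sup>2)"
    using dualfl_t_0_ge_1[of n] by (simp add: power2_eq_square algebra_simps)
  also have "\<dots> = 2 * ?t + 1" using dualfl_t_0_ge_1[of n] by simp
  finally show ?thesis unfolding dualfl_t_0_Suc by simp
qed

lemma dualfl_t_0_Suc_sq: "(dualfl_t 0 (Suc n))\<^sup>2 - dualfl_t 0 (Suc n) = (dualfl_t 0 n)\<^sup>2"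
  unfolding dualfl_t_0_Suc by (simp add: power2_eq_square field_simps)

lemma dualfl_t_0_ge: "1 + real n / 2 \<le> dualfl_t 0 n"
proof (induction n)
  case (Suc n)
  then show ?case using dualfl_t_0_Suc_ge[of n] by (simp add: add_divide_distrib)
qed simp

lemma dualfl_t_0_le: "dualfl_t 0 n \<le> real n + 1"
proof (induction n)
  case (Suc n)
  then show ?case using dualfl_t_0_Suc_le[of n] by simp
qed simp

lemma dualfl_beta_0: "dualfl_beta 0 n = (dualfl_t 0 n - 1) / dualfl_t 0 (Suc n)"
  unfolding dualfl_beta_def by simp

lemma dualfl_beta_0_bounds: "0 \<le> dualfl_beta 0 n" "dualfl_beta 0 n \<le> 1"
  unfolding dualfl_beta_0
  using dualfl_t_0_ge_1[of n] dualfl_t_0_ge_1[of "Suc n"] dualfl_t_0_Suc_ge[of n] by auto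

lemma dualfl_t_0_mult_beta_0: "dualfl_t 0 (Suc n) * dualfl_beta 0 n = dualfl_t 0 n - 1"
  unfolding dualfl_beta_0 using dualfl_t_0_ge_1[of "Suc n"] by simp

lemma fista_identity:
  fixes z g x u :: "'a::real_inner"
  shows "t * inner g (z - u) + (t\<^sup>2 - t) * inner g (z - x) - t\<^sup>2 / 2 * (norm g)\<^sup>2
     = 1/2 * (norm (t *\<^sub>R z - (t - 1) *\<^sub>R x - u))\<^sup>2
       - 1/2 * (norm (t *\<^sub>R (z - g) - (t - 1) *\<^sub>R x - u))\<^sup>2"
  unfolding power2_norm_eq_inner
  by (simp add: inner_simps algebra_simps inner_commute power2_eq_square)

lemma summable_sq_div_powr:
  fixes p c :: real
  assumes "p > 3"
  shows "summable (\<lambda>n. (real n + 1)\<^sup>2 / (c * (real n + 1) powr p))"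
proof -
  have "summable (\<lambda>n. real n powr (2 - p))"
    using assms by (simp add: summable_real_powr_iff)
  then have "summable (\<lambda>n. (1 / c) * real (Suc n) powr (2 - p))"
    by (subst summable_Suc_iff) (rule summable_mult)
  moreover have "(real n + 1)\<^sup>2 / (c * (real n + 1) powr p) = (1 / c) * real (Suc n) powr (2 - p)" for n
  proof -
    have "(real n + 1)\<^sup>2 = (real n + 1) powr 2" by (simp add: powr_realpow)
    then show ?thesis by (simp add: powr_diff add.commute)
  qed
  ultimately show ?thesis by simp
qed

lemma sq_le_linear_imp_sq_le:
  fixes r a b :: real
  assumes "r\<^sup>2 \<le> a + b * r"
  shows "r\<^sup>2 \<le> 2 * a + b\<^sup>2"
  using assms sum_squares_bound[of b r] by (simp add: power2_eq_square)

section \<open>DualFL as an inexact accelerated method on the dual problem\<close>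

locale dualfl_inexact =
  fixes N :: nat and F :: "nat \<Rightarrow> 'a::euclidean_space \<Rightarrow> real" and \<nu> :: real
    and th :: "nat \<Rightarrow> nat \<Rightarrow> 'a" and \<delta> :: "nat \<Rightarrow> real"
  assumes N_pos: "N \<ge> 1" and nu_pos: "\<nu> > 0"
    and F_cont: "\<And>j. j \<in> {1..N} \<Longrightarrow> continuous_on UNIV (F j)"
    and init: "\<And>j. j \<in> {1..N} \<Longrightarrow> th 0 j = 0"
    and err_summable: "summable (\<lambda>n. (real n + 1)\<^sup>2 * \<delta> n)"
    and gap_le: "\<And>n j. j \<in> {1..N} \<Longrightarrow>
      dualfl_gap (F j) \<nu> (dualfl_zeta 0 N th j n) (th (Suc n) j) \<le> ereal (\<delta> n)"
begin

abbreviation J where "J \<equiv> {1..N}"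
abbreviation \<zeta> where "\<zeta> n j \<equiv> dualfl_zeta 0 N th j n"
abbreviation avg where "avg n \<equiv> dualfl_avg N th n"
abbreviation \<tau> where "\<tau> n \<equiv> dualfl_t 0 n"
abbreviation \<beta> where "\<beta> n \<equiv> dualfl_beta 0 n"

lemma minorant:
  "j \<in> J \<Longrightarrow> F j (th (Suc n) j) + \<nu> * inner (\<zeta> n j) (u - th (Suc n) j)
     + \<nu> / 2 * (norm (u - th (Suc n) j))\<^sup>2 - \<delta> n \<le> F j u"
  using dualfl_gap_le_imp_minorant[OF gap_le nu_pos] .

lemma err_nonneg: "0 \<le> \<delta> n"
  using minorant[of 1 n "th (Suc n) 1"] N_pos by simp

definition err_total :: real where
  "err_total = (\<Sum>n. (real n + 1)\<^sup>2 * \<delta> n)"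

lemma err_le_weighted: "\<delta> n \<le> (real n + 1)\<^sup>2 * \<delta> n"
  using mult_right_mono[of 1 "(real n + 1)\<^sup>2", OF _ err_nonneg[of n]] by simp

lemma err_le_total: "\<delta> n \<le> err_total"
proof -
  have "\<delta> n \<le> (real n + 1)\<^sup>2 * \<delta> n" by (fact err_le_weighted)
  also have "\<dots> \<le> err_total"
    unfolding err_total_def using sum_le_suminf[OF err_summable, of "{n}"] err_nonneg by simp
  finally show ?thesis .
qed

lemma err_tendsto_0: "\<delta> \<longlonglongrightarrow> 0"
proof (rule Lim_null_comparison[OF _ summable_LIMSEQ_zero[OF err_summable]])
  show "\<forall>\<^sub>F n in sequentially. norm (\<delta> n) \<le> (real n + 1)\<^sup>2 * \<delta> n"
    using err_nonneg err_le_weighted by (intro always_eventually allI) simp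
qed

lemma avg_0: "avg 0 = 0"
  unfolding dualfl_avg_def using init by simp

lemma sum_th: "(\<Sum>j\<in>J. th n j) = real N *\<^sub>R avg n"
  unfolding dualfl_avg_def using N_pos by simp

text \<open>The dual iterates of the accelerated scheme: \<open>\<zeta>\<close> is their extrapolation.\<close>
definition dual :: "nat \<Rightarrow> nat \<Rightarrow> 'a" where
  "dual n j = (case n of 0 \<Rightarrow> 0 | Suc m \<Rightarrow> \<zeta> m j + avg (Suc m) - th (Suc m) j)"

lemma dual_0 [simp]: "dual 0 j = 0"
  by (simp add: dual_def)

lemma dual_Suc: "dual (Suc m) j = \<zeta> m j + avg (Suc m) - th (Suc m) j"
  by (simp add: dual_def)

lemma zeta_Suc: "j \<in> J \<Longrightarrow> \<zeta> (Suc n) j = dual (Suc n) j + \<beta> n *\<^sub>R (dual (Suc n) j - dual n j)"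
  by (cases n) (simp_all add: dual_Suc init avg_0 algebra_simps)

lemma sum_zeta_sum_dual: "(\<Sum>j\<in>J. \<zeta> n j) = 0 \<and> (\<Sum>j\<in>J. dual n j) = 0"
proof (induction n rule: nat_less_induct)
  case (1 n)
  have sum_dual_Suc: "(\<Sum>j\<in>J. dual (Suc m) j) = (\<Sum>j\<in>J. \<zeta> m j)" for m
    using sum_th[of "Suc m"] by (simp add: dual_Suc sum.distrib sum_subtractf sum_constant_scaleR)
  show ?case
  proof (cases n)
    case (Suc m)
    with 1 have "(\<Sum>j\<in>J. \<zeta> m j) = 0" "(\<Sum>j\<in>J. dual m j) = 0" by auto
    moreover have "(\<Sum>j\<in>J. \<zeta> (Suc m) j) = (\<Sum>j\<in>J. dual (Suc m) j + \<beta> m *\<^sub>R (dual (Suc m) j - dual m j))"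
      by (rule sum.cong) (auto simp: zeta_Suc)
    ultimately show ?thesis
      using Suc sum_dual_Suc by (simp add: sum.distrib sum_subtractf flip: scaleR_sum_right)
  qed simp
qed

lemma sum_zeta: "(\<Sum>j\<in>J. \<zeta> n j) = 0" and sum_dual: "(\<Sum>j\<in>J. dual n j) = 0"
  using sum_zeta_sum_dual by auto

definition sqnorm_sum :: "(nat \<Rightarrow> 'a) \<Rightarrow> real" where
  "sqnorm_sum v = (\<Sum>j\<in>J. (norm (v j))\<^sup>2)"

definition inner_sum :: "(nat \<Rightarrow> 'a) \<Rightarrow> (nat \<Rightarrow> 'a) \<Rightarrow> real" where
  "inner_sum v w = (\<Sum>j\<in>J. inner (v j) (w j))"

lemma sqnorm_sum_nonneg: "0 \<le> sqnorm_sum v"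
  unfolding sqnorm_sum_def by (rule sum_nonneg) simp

lemma sqnorm_le_sqnorm_sum: "j \<in> J \<Longrightarrow> (norm (v j))\<^sup>2 \<le> sqnorm_sum v"
  unfolding sqnorm_sum_def by (rule member_le_sum) auto

lemma sqnorm_sum_scaleR: "sqnorm_sum (\<lambda>j. c *\<^sub>R v j) = c\<^sup>2 * sqnorm_sum v"
  unfolding sqnorm_sum_def by (simp add: sum_distrib_left power_mult_distrib)

text \<open>The conjugate of \<open>F j / \<nu>\<close>; its sum over the clients is the energy of the dual problem
  (minimised over \<open>\<Sum>j. \<zeta> j = 0\<close>) on which DualFL is an accelerated inexact proximal method.
  The real supremum is not junk: the minorants bound the set above (\<open>local_conj_arg_le\<close>).\<close>
definition local_conj :: "nat \<Rightarrow> 'a \<Rightarrow> real" where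
  "local_conj j w = Sup (range (\<lambda>u. inner w u - F j u / \<nu>))"

definition dual_energy :: "(nat \<Rightarrow> 'a) \<Rightarrow> real" where
  "dual_energy \<xi> = (\<Sum>j\<in>J. local_conj j (\<xi> j))"

lemma local_conj_arg_le:
  assumes j: "j \<in> J"
  shows "inner w u - F j u / \<nu> \<le> inner w (th (Suc n) j) - F j (th (Suc n) j) / \<nu>
           + 1/2 * (norm (w - \<zeta> n j))\<^sup>2 + \<delta> n / \<nu>"
proof -
  let ?t = "th (Suc n) j"
  have "(F j ?t + \<nu> * inner (\<zeta> n j) (u - ?t) + \<nu> / 2 * (norm (u - ?t))\<^sup>2 - \<delta> n) / \<nu> \<le> F j u / \<nu>"
    using minorant[OF j, of n u] nu_pos by (simp add: divide_right_mono)
  moreover have "(F j ?t + \<nu> * inner (\<zeta> n j) (u - ?t) + \<nu> / 2 * (norm (u - ?t))\<^sup>2 - \<delta> n) / \<nu>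
     = F j ?t / \<nu> + inner (\<zeta> n j) (u - ?t) + 1 / 2 * (norm (u - ?t))\<^sup>2 - \<delta> n / \<nu>"
    using nu_pos by (simp add: field_simps)
  moreover have "inner (w - \<zeta> n j) (u - ?t) - 1/2 * (norm (u - ?t))\<^sup>2 \<le> 1/2 * (norm (w - \<zeta> n j))\<^sup>2"
    using zero_le_power2[of "norm ((w - \<zeta> n j) - (u - ?t))"]
    by (simp add: power2_norm_eq_inner inner_diff_left inner_diff_right inner_commute algebra_simps)
  moreover have "inner w u = inner w ?t + inner (w - \<zeta> n j) (u - ?t) + inner (\<zeta> n j) (u - ?t)"
    by (simp add: inner_diff_left inner_diff_right)
  ultimately show ?thesis by linarith
qed

lemma local_conj_ge:
  assumes j: "j \<in> J"
  shows "inner w u - F j u / \<nu> \<le> local_conj j w"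
proof -
  have "bdd_above (range (\<lambda>u. inner w u - F j u / \<nu>))"
    by (rule bdd_aboveI2, rule local_conj_arg_le[OF j, of w _ 0])
  then show ?thesis unfolding local_conj_def by (rule cSup_upper[rotated]) simp
qed

lemma local_conj_le:
  assumes "j \<in> J"
  shows "local_conj j w \<le> inner w (th (Suc n) j) - F j (th (Suc n) j) / \<nu>
           + 1/2 * (norm (w - \<zeta> n j))\<^sup>2 + \<delta> n / \<nu>"
  unfolding local_conj_def by (rule cSup_least) (use local_conj_arg_le[OF assms] in auto)

definition err :: "nat \<Rightarrow> real" where
  "err n = real N * \<delta> n / \<nu>"

text \<open>One inexact proximal-gradient step on the dual problem.\<close>
lemma dual_energy_step:
  assumes u: "(\<Sum>j\<in>J. u j) = 0"
  shows "dual_energy (dual (Suc n)) \<le> dual_energy u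
           + inner_sum (\<lambda>j. \<zeta> n j - dual (Suc n) j) (\<lambda>j. \<zeta> n j - u j)
           - 1/2 * sqnorm_sum (\<lambda>j. \<zeta> n j - dual (Suc n) j) + err n"
proof -
  let ?g = "\<lambda>j. th (Suc n) j - avg (Suc n)"
  have g: "\<zeta> n j - dual (Suc n) j = ?g j" for j by (simp add: dual_Suc algebra_simps)
  have "dual_energy (dual (Suc n)) - dual_energy u \<le> (\<Sum>j\<in>J. inner (dual (Suc n) j) (th (Suc n) j)
           + 1/2 * (norm (dual (Suc n) j - \<zeta> n j))\<^sup>2 - inner (u j) (th (Suc n) j)) + err n"
  proof -
    have "dual_energy (dual (Suc n)) \<le> (\<Sum>j\<in>J. inner (dual (Suc n) j) (th (Suc n) j)
           - F j (th (Suc n) j) / \<nu> + 1/2 * (norm (dual (Suc n) j - \<zeta> n j))\<^sup>2 + \<delta> n / \<nu>)"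
      unfolding dual_energy_def by (intro sum_mono local_conj_le)
    moreover have "(\<Sum>j\<in>J. inner (u j) (th (Suc n) j) - F j (th (Suc n) j) / \<nu>) \<le> dual_energy u"
      unfolding dual_energy_def by (intro sum_mono local_conj_ge)
    ultimately show ?thesis by (simp add: err_def sum.distrib sum_subtractf)
  qed
  also have "(\<Sum>j\<in>J. inner (dual (Suc n) j) (th (Suc n) j)
           + 1/2 * (norm (dual (Suc n) j - \<zeta> n j))\<^sup>2 - inner (u j) (th (Suc n) j))
      = (\<Sum>j\<in>J. inner (?g j) (\<zeta> n j - u j) - 1/2 * (norm (?g j))\<^sup>2)
        + inner (\<Sum>j\<in>J. dual (Suc n) j - u j) (avg (Suc n))"
  proof -
    have "inner (dual (Suc n) j) (th (Suc n) j) + 1/2 * (norm (dual (Suc n) j - \<zeta> n j))\<^sup>2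
        - inner (u j) (th (Suc n) j)
      = inner (?g j) (\<zeta> n j - u j) - 1/2 * (norm (?g j))\<^sup>2
        + inner (dual (Suc n) j - u j) (avg (Suc n))" for j
      by (simp add: dual_Suc inner_simps power2_norm_eq_inner algebra_simps inner_commute)
    then show ?thesis by (simp add: inner_sum_left sum.distrib)
  qed
  also have "(\<Sum>j\<in>J. dual (Suc n) j - u j) = 0"
    using sum_dual u by (simp add: sum_subtractf)
  finally show ?thesis
    unfolding inner_sum_def sqnorm_sum_def g by (simp add: sum_subtractf sum_distrib_left)
qed

definition lyapunov :: "(nat \<Rightarrow> 'a) \<Rightarrow> nat \<Rightarrow> real" where
  "lyapunov u n = (\<tau> n)\<^sup>2 * (dual_energy (dual (Suc n)) - dual_energy u)
     + 1/2 * sqnorm_sum (\<lambda>j. \<tau> n *\<^sub>R dual (Suc n) j - (\<tau> n - 1) *\<^sub>R dual n j - u j)"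

lemma lyapunov_step:
  assumes u: "(\<Sum>j\<in>J. u j) = 0"
  shows "lyapunov u n \<le> ((\<tau> n)\<^sup>2 - \<tau> n) * (dual_energy (dual n) - dual_energy u)
           + 1/2 * sqnorm_sum (\<lambda>j. \<tau> n *\<^sub>R \<zeta> n j - (\<tau> n - 1) *\<^sub>R dual n j - u j) + (\<tau> n)\<^sup>2 * err n"
proof -
  let ?t = "\<tau> n"
  let ?g = "\<lambda>j. \<zeta> n j - dual (Suc n) j"
  let ?step = "\<lambda>v. inner_sum ?g (\<lambda>j. \<zeta> n j - v j) - 1/2 * sqnorm_sum ?g + err n"
  have t: "1 \<le> ?t" "0 \<le> ?t\<^sup>2 - ?t"
    using dualfl_t_0_ge_1[of n] by (auto simp: power2_eq_square)
  have "?t\<^sup>2 * (dual_energy (dual (Suc n)) - dual_energy u) - (?t\<^sup>2 - ?t) * (dual_energy (dual n) - dual_energy u)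
      = ?t * (dual_energy (dual (Suc n)) - dual_energy u) + (?t\<^sup>2 - ?t) * (dual_energy (dual (Suc n)) - dual_energy (dual n))"
    by (simp add: algebra_simps power2_eq_square)
  also have "\<dots> \<le> ?t * ?step u + (?t\<^sup>2 - ?t) * ?step (dual n)"
    using dual_energy_step[OF u, of n] dual_energy_step[OF sum_dual[of n], of n] t
    by (intro add_mono mult_left_mono) auto
  also have "\<dots> = ?t * inner_sum ?g (\<lambda>j. \<zeta> n j - u j) + (?t\<^sup>2 - ?t) * inner_sum ?g (\<lambda>j. \<zeta> n j - dual n j)
       - ?t\<^sup>2 / 2 * sqnorm_sum ?g + ?t\<^sup>2 * err n"
    by (simp add: field_simps power2_eq_square)
  also have "\<dots> = (\<Sum>j\<in>J. ?t * inner (?g j) (\<zeta> n j - u j) + (?t\<^sup>2 - ?t) * inner (?g j) (\<zeta> n j - dual n j)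
       - ?t\<^sup>2 / 2 * (norm (?g j))\<^sup>2) + ?t\<^sup>2 * err n"
    unfolding inner_sum_def sqnorm_sum_def by (simp add: sum.distrib sum_subtractf sum_distrib_left)
  also have "\<dots> = 1/2 * sqnorm_sum (\<lambda>j. ?t *\<^sub>R \<zeta> n j - (?t - 1) *\<^sub>R dual n j - u j)
       - 1/2 * sqnorm_sum (\<lambda>j. ?t *\<^sub>R dual (Suc n) j - (?t - 1) *\<^sub>R dual n j - u j) + ?t\<^sup>2 * err n"
    unfolding sqnorm_sum_def fista_identity by (simp add: sum_subtractf sum_distrib_left)
  finally show ?thesis unfolding lyapunov_def by linarith
qed

text \<open>The momentum rule makes the extrapolated point in step \<open>n + 1\<close> coincide with the
  interpolated point of step \<open>n\<close>, so the Lyapunov function telescopes.\<close>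
lemma momentum_point:
  assumes "j \<in> J"
  shows "\<tau> (Suc m) *\<^sub>R \<zeta> (Suc m) j - (\<tau> (Suc m) - 1) *\<^sub>R dual (Suc m) j
       = \<tau> m *\<^sub>R dual (Suc m) j - (\<tau> m - 1) *\<^sub>R dual m j"
proof -
  have "\<tau> (Suc m) *\<^sub>R \<zeta> (Suc m) j - (\<tau> (Suc m) - 1) *\<^sub>R dual (Suc m) j
      = dual (Suc m) j + (\<tau> (Suc m) * \<beta> m) *\<^sub>R (dual (Suc m) j - dual m j)"
    unfolding zeta_Suc[OF assms] by (simp add: algebra_simps)
  then show ?thesis unfolding dualfl_t_0_mult_beta_0 by (simp add: algebra_simps)
qed

lemma lyapunov_le:
  assumes u: "(\<Sum>j\<in>J. u j) = 0"
  shows "lyapunov u n \<le> 1/2 * sqnorm_sum u + (\<Sum>k\<le>n. (\<tau> k)\<^sup>2 * err k)"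
proof (induction n)
  case 0
  then show ?case using lyapunov_step[OF u, of 0] by (simp add: sqnorm_sum_def)
next
  case (Suc m)
  have "sqnorm_sum (\<lambda>j. \<tau> (Suc m) *\<^sub>R \<zeta> (Suc m) j - (\<tau> (Suc m) - 1) *\<^sub>R dual (Suc m) j - u j)
      = sqnorm_sum (\<lambda>j. \<tau> m *\<^sub>R dual (Suc m) j - (\<tau> m - 1) *\<^sub>R dual m j - u j)"
    unfolding sqnorm_sum_def by (rule sum.cong) (simp_all add: momentum_point)
  then have "lyapunov u (Suc m) \<le> lyapunov u m + (\<tau> (Suc m))\<^sup>2 * err (Suc m)"
    using lyapunov_step[OF u, of "Suc m"] unfolding lyapunov_def dualfl_t_0_Suc_sq by simp
  then show ?case using Suc by simp
qed

definition err_bound :: real where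
  "err_bound = real N / \<nu> * err_total"

lemma sum_weighted_err_le: "(\<Sum>k\<le>n. (\<tau> k)\<^sup>2 * err k) \<le> err_bound"
proof -
  have "(\<tau> k)\<^sup>2 * err k \<le> real N / \<nu> * ((real k + 1)\<^sup>2 * \<delta> k)" for k
  proof -
    have "(\<tau> k)\<^sup>2 \<le> (real k + 1)\<^sup>2"
      using dualfl_t_0_le[of k] dualfl_t_0_ge_1[of k] by (intro power_mono) auto
    from mult_right_mono[OF this, of "err k"] show ?thesis
      using err_nonneg[of k] nu_pos by (simp add: err_def mult_ac)
  qed
  then have "(\<Sum>k\<le>n. (\<tau> k)\<^sup>2 * err k) \<le> real N / \<nu> * (\<Sum>k\<le>n. (real k + 1)\<^sup>2 * \<delta> k)"
    by (simp add: sum_distrib_left sum_mono)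
  also have "\<dots> \<le> err_bound"
    unfolding err_bound_def err_total_def using nu_pos err_nonneg
    by (intro mult_left_mono sum_le_suminf err_summable) auto
  finally show ?thesis .
qed

lemma err_bound_nonneg: "0 \<le> err_bound"
  unfolding err_bound_def err_total_def using nu_pos err_nonneg
  by (intro mult_nonneg_nonneg suminf_nonneg err_summable) auto

lemma dual_energy_dual_le: "dual_energy (dual n) \<le> dual_energy (\<lambda>j. 0) + err_bound"
proof (cases n)
  case 0
  have "dual 0 = (\<lambda>j. 0)" by auto
  then show ?thesis using 0 err_bound_nonneg by simp
next
  case (Suc m)
  let ?d = "dual_energy (dual (Suc m)) - dual_energy (\<lambda>j. 0)"
  have "lyapunov (\<lambda>j. 0) m \<le> err_bound"
    using lyapunov_le[of "\<lambda>j. 0" m] sum_weighted_err_le[of m] by (simp add: sqnorm_sum_def)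
  then have le: "(\<tau> m)\<^sup>2 * ?d \<le> err_bound"
    unfolding lyapunov_def
    using sqnorm_sum_nonneg[of "\<lambda>j. \<tau> m *\<^sub>R dual (Suc m) j - (\<tau> m - 1) *\<^sub>R dual m j - 0"] by linarith
  have "?d \<le> err_bound"
  proof (cases "0 \<le> ?d")
    case True
    have "1 \<le> (\<tau> m)\<^sup>2" using dualfl_t_0_ge_1[of m] by (simp add: one_le_power)
    from mult_right_mono[OF this True] le show ?thesis by simp
  qed (use err_bound_nonneg in simp)
  then show ?thesis using Suc by simp
qed

lemma dual_diff_le:
  "(\<tau> m - 1)\<^sup>2 * sqnorm_sum (\<lambda>j. dual (Suc m) j - dual m j) \<le> sqnorm_sum (dual (Suc m)) + 2 * err_bound"
proof -
  have "lyapunov (dual (Suc m)) m \<le> 1/2 * sqnorm_sum (dual (Suc m)) + err_bound"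
    using lyapunov_le[OF sum_dual, of "Suc m" m] sum_weighted_err_le[of m] by linarith
  moreover have "sqnorm_sum (\<lambda>j. \<tau> m *\<^sub>R dual (Suc m) j - (\<tau> m - 1) *\<^sub>R dual m j - dual (Suc m) j)
      = (\<tau> m - 1)\<^sup>2 * sqnorm_sum (\<lambda>j. dual (Suc m) j - dual m j)"
    unfolding sqnorm_sum_scaleR[symmetric] by (simp add: algebra_simps)
  ultimately show ?thesis unfolding lyapunov_def by simp
qed

lemma F_bounded_above_on_unit_ball: "\<exists>M. \<forall>j\<in>J. \<forall>v\<in>cball 0 1. F j v \<le> M j"
proof -
  have "\<exists>M. \<forall>v\<in>cball 0 1. F j v \<le> M" if j: "j \<in> J" for j
  proof -
    have "continuous_on (cball 0 1) (F j)"
      using F_cont[OF j] by (rule continuous_on_subset) simp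
    then obtain v0 where "\<forall>v\<in>cball 0 1. F j v \<le> F j v0"
      using continuous_attains_sup[of "cball (0::'a) 1" "F j"] by auto
    then show ?thesis by blast
  qed
  then show ?thesis by metis
qed

lemma dual_energy_coercive: "\<exists>K. \<forall>\<xi>. sqrt (sqnorm_sum \<xi>) \<le> dual_energy \<xi> + K"
proof -
  obtain M where M: "\<And>j v. j \<in> J \<Longrightarrow> v \<in> cball 0 1 \<Longrightarrow> F j v \<le> M j"
    using F_bounded_above_on_unit_ball by blast
  have "sqrt (sqnorm_sum \<xi>) \<le> dual_energy \<xi> + (\<Sum>j\<in>J. M j) / \<nu>" for \<xi>
  proof -
    define r where "r = sqrt (sqnorm_sum \<xi>)"
    have r: "0 \<le> r" "r * r = sqnorm_sum \<xi>" unfolding r_def using sqnorm_sum_nonneg by auto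
    have "(\<Sum>j\<in>J. inner (\<xi> j) ((1 / r) *\<^sub>R \<xi> j) - M j / \<nu>) \<le> dual_energy \<xi>"
      unfolding dual_energy_def
    proof (rule sum_mono)
      fix j assume j: "j \<in> J"
      have "norm (\<xi> j) \<le> r"
        unfolding r_def using sqnorm_le_sqnorm_sum[OF j, of \<xi>] by (simp add: real_le_rsqrt)
      then have "(1 / r) *\<^sub>R \<xi> j \<in> cball 0 1"
        using r by (cases "r = 0") (auto simp: field_simps)
      then have "F j ((1 / r) *\<^sub>R \<xi> j) / \<nu> \<le> M j / \<nu>"
        using M[OF j] nu_pos by (simp add: divide_right_mono)
      then show "inner (\<xi> j) ((1 / r) *\<^sub>R \<xi> j) - M j / \<nu> \<le> local_conj j (\<xi> j)"
        using local_conj_ge[OF j, of "\<xi> j" "(1 / r) *\<^sub>R \<xi> j"] by linarith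
    qed
    moreover have "(\<Sum>j\<in>J. inner (\<xi> j) ((1 / r) *\<^sub>R \<xi> j)) = r"
    proof -
      have "(\<Sum>j\<in>J. inner (\<xi> j) ((1 / r) *\<^sub>R \<xi> j)) = sqnorm_sum \<xi> / r"
        unfolding sqnorm_sum_def by (simp add: sum_divide_distrib power2_norm_eq_inner)
      also have "\<dots> = r" using r by (cases "r = 0") (auto simp: field_simps)
      finally show ?thesis .
    qed
    ultimately show ?thesis
      unfolding r_def by (simp add: sum_subtractf sum_divide_distrib)
  qed
  then show ?thesis by blast
qed

lemma dual_bounded: "\<exists>C. \<forall>n. sqnorm_sum (dual n) \<le> C"
proof -
  obtain K where K: "\<And>\<xi>. sqrt (sqnorm_sum \<xi>) \<le> dual_energy \<xi> + K"
    using dual_energy_coercive by blast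
  have "sqnorm_sum (dual n) \<le> (dual_energy (\<lambda>j. 0) + err_bound + K)\<^sup>2" for n
  proof -
    have "sqrt (sqnorm_sum (dual n)) \<le> dual_energy (\<lambda>j. 0) + err_bound + K"
      using K[of "dual n"] dual_energy_dual_le[of n] by linarith
    from power_mono[OF this real_sqrt_ge_zero[OF sqnorm_sum_nonneg], of 2] show ?thesis
      using sqnorm_sum_nonneg by simp
  qed
  then show ?thesis by blast
qed

lemma zeta_bounded: "\<exists>B. \<forall>n. \<forall>j\<in>J. norm (\<zeta> n j) \<le> B"
proof -
  obtain C where C: "\<And>n. sqnorm_sum (dual n) \<le> C" using dual_bounded by blast
  have dual: "norm (dual n j) \<le> sqrt C" if "j \<in> J" for n j
    using sqnorm_le_sqnorm_sum[OF that, of "dual n"] C[of n] by (simp add: real_le_rsqrt)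
  have "norm (\<zeta> n j) \<le> 3 * sqrt C" if j: "j \<in> J" for n j
  proof (cases n)
    case 0
    then show ?thesis using dual[OF j, of 0] by simp
  next
    case (Suc m)
    have "norm (\<zeta> n j) \<le> norm (dual (Suc m) j) + \<beta> m * norm (dual (Suc m) j - dual m j)"
      unfolding Suc zeta_Suc[OF j]
      by (rule order_trans[OF norm_triangle_ineq]) (use dualfl_beta_0_bounds(1)[of m] in simp)
    also have "\<dots> \<le> norm (dual (Suc m) j) + \<beta> m * (norm (dual (Suc m) j) + norm (dual m j))"
      using dualfl_beta_0_bounds(1)[of m] by (intro add_left_mono mult_left_mono norm_triangle_ineq4) auto
    also have "\<dots> \<le> sqrt C + 1 * (sqrt C + sqrt C)"
      using dual[OF j] dualfl_beta_0_bounds[of m] by (intro add_mono mult_mono) auto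
    finally show ?thesis by simp
  qed
  then show ?thesis by blast
qed

section \<open>Consensus and primal convergence\<close>

text \<open>The Lyapunov bound gives \<open>\<tau> m * norm (dual (Suc m) j - dual m j) = O(1)\<close> with
  \<open>\<tau> m\<close> growing linearly.\<close>
lemma dual_diff_tendsto_0:
  assumes j: "j \<in> J"
  shows "(\<lambda>m. dual (Suc m) j - dual m j) \<longlonglongrightarrow> 0"
proof -
  obtain C where C: "\<And>n. sqnorm_sum (dual n) \<le> C" using dual_bounded by blast
  define c where "c = 4 * sqrt (C + 2 * err_bound)"
  have "norm (dual (Suc m) j - dual m j) \<le> c * inverse (real (Suc m))" if m: "m \<ge> 1" for m
  proof -
    let ?v = "norm (dual (Suc m) j - dual m j)"
    have "((\<tau> m - 1) * ?v)\<^sup>2 \<le> (\<tau> m - 1)\<^sup>2 * sqnorm_sum (\<lambda>j. dual (Suc m) j - dual m j)"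
      using sqnorm_le_sqnorm_sum[OF j, of "\<lambda>j. dual (Suc m) j - dual m j"]
      by (simp add: power_mult_distrib mult_left_mono)
    also have "\<dots> \<le> C + 2 * err_bound" using dual_diff_le[of m] C[of "Suc m"] by linarith
    finally have "(\<tau> m - 1) * ?v \<le> sqrt (C + 2 * err_bound)" by (simp add: real_le_rsqrt)
    moreover have "(real m + 1) / 4 * ?v \<le> (\<tau> m - 1) * ?v"
      using dualfl_t_0_ge[of m] m by (intro mult_right_mono) auto
    ultimately show ?thesis unfolding c_def by (simp add: field_simps)
  qed
  then show ?thesis
    by (intro Lim_null_comparison[OF eventually_sequentiallyI
          tendsto_mult_right_zero[OF LIMSEQ_inverse_real_of_nat]])
qed

lemma local_minus_avg_tendsto_0:
  assumes j: "j \<in> J"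
  shows "(\<lambda>n. th (Suc n) j - avg (Suc n)) \<longlonglongrightarrow> 0"
proof -
  have bound: "norm (\<zeta> (Suc m) j - dual (Suc (Suc m)) j)
      \<le> norm (dual (Suc (Suc m)) j - dual (Suc m) j) + norm (dual (Suc m) j - dual m j)" for m
  proof -
    have "\<zeta> (Suc m) j - dual (Suc (Suc m)) j
        = - (dual (Suc (Suc m)) j - dual (Suc m) j) + \<beta> m *\<^sub>R (dual (Suc m) j - dual m j)"
      by (simp add: zeta_Suc[OF j] algebra_simps)
    then have "norm (\<zeta> (Suc m) j - dual (Suc (Suc m)) j)
        \<le> norm (- (dual (Suc (Suc m)) j - dual (Suc m) j)) + norm (\<beta> m *\<^sub>R (dual (Suc m) j - dual m j))"
      by (simp only: norm_triangle_ineq)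
    then have "norm (\<zeta> (Suc m) j - dual (Suc (Suc m)) j)
        \<le> norm (dual (Suc (Suc m)) j - dual (Suc m) j) + \<beta> m * norm (dual (Suc m) j - dual m j)"
      using dualfl_beta_0_bounds(1)[of m] by (simp only: norm_minus_cancel norm_scaleR abs_of_nonneg)
    also have "\<dots> \<le> norm (dual (Suc (Suc m)) j - dual (Suc m) j) + 1 * norm (dual (Suc m) j - dual m j)"
      using dualfl_beta_0_bounds(2)[of m] by (intro add_left_mono mult_right_mono) auto
    finally show ?thesis by simp
  qed
  have lim: "(\<lambda>m. norm (dual (Suc (Suc m)) j - dual (Suc m) j) + norm (dual (Suc m) j - dual m j))
      \<longlonglongrightarrow> 0"
  proof (rule tendsto_add_zero)
    show "(\<lambda>m. norm (dual (Suc m) j - dual m j)) \<longlonglongrightarrow> 0"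
      using dual_diff_tendsto_0[OF j] by (simp only: tendsto_norm_zero_iff)
    then show "(\<lambda>m. norm (dual (Suc (Suc m)) j - dual (Suc m) j)) \<longlonglongrightarrow> 0"
      by (rule LIMSEQ_Suc)
  qed
  have "(\<lambda>m. \<zeta> (Suc m) j - dual (Suc (Suc m)) j) \<longlonglongrightarrow> 0"
    by (rule Lim_null_comparison[OF always_eventually lim]) (use bound in blast)
  then have "(\<lambda>n. \<zeta> n j - dual (Suc n) j) \<longlonglongrightarrow> 0" by (rule LIMSEQ_imp_Suc)
  then show ?thesis by (simp add: dual_Suc)
qed
lemma local_iterates_bounded:
  assumes j: "j \<in> J"
  shows "bounded (range (\<lambda>n. th (Suc n) j))"
proof -
  obtain B where B: "\<And>n. norm (\<zeta> n j) \<le> B" using zeta_bounded j by blast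
  define c where "c = F j (th (Suc 0) j) - \<delta> 0"
  have c: "c \<le> F j u" for u
  proof -
    have "0 \<le> \<nu> / 2 * (norm (u - th (Suc 0) j))\<^sup>2" using nu_pos by simp
    then show ?thesis using minorant[OF j, of 0 u] unfolding c_def by simp
  qed
  define a where "a = 2 * (F j 0 - c + err_total) / \<nu>"
  have "norm (th (Suc n) j) \<le> sqrt (2 * a + (2 * B)\<^sup>2)" for n
  proof -
    let ?t = "th (Suc n) j"
    have "inner (\<zeta> n j) ?t \<le> B * norm ?t"
      using norm_cauchy_schwarz[of "\<zeta> n j" ?t] mult_right_mono[OF B[of n] norm_ge_zero[of ?t]]
      by linarith
    then have "\<nu> * inner (\<zeta> n j) ?t \<le> \<nu> * (B * norm ?t)"
      using nu_pos by simp
    then have "\<nu> / 2 * (norm ?t)\<^sup>2 \<le> F j 0 - c + err_total + \<nu> * (B * norm ?t)"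
      using minorant[OF j, of n 0] c[of ?t] err_le_total[of n] by (simp add: inner_minus_right)
    then have "(norm ?t)\<^sup>2 \<le> a + 2 * B * norm ?t"
      unfolding a_def using nu_pos by (simp add: field_simps)
    from sq_le_linear_imp_sq_le[OF this] show ?thesis by (simp add: real_le_rsqrt)
  qed
  then show ?thesis unfolding bounded_iff by blast
qed

lemma F_avg_minus_F_local_tendsto_0:
  assumes j: "j \<in> J"
  shows "(\<lambda>n. F j (avg (Suc n)) - F j (th (Suc n) j)) \<longlonglongrightarrow> 0"
proof -
  have "bounded (range (\<lambda>n. th (Suc n) j) \<union> range (\<lambda>n. th (Suc n) j - avg (Suc n)))"
    using local_iterates_bounded[OF j] convergent_imp_bounded[OF local_minus_avg_tendsto_0[OF j]] by simp
  then obtain B where "\<forall>x \<in> range (\<lambda>n. th (Suc n) j) \<union> range (\<lambda>n. th (Suc n) j - avg (Suc n)). norm x \<le> B"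
    unfolding bounded_iff by blast
  then have B: "norm (th (Suc n) j) \<le> B" "norm (th (Suc n) j - avg (Suc n)) \<le> B" for n
    by simp_all
  have avg: "norm (avg (Suc n)) \<le> 2 * B" for n
    using norm_triangle_ineq4[of "th (Suc n) j" "th (Suc n) j - avg (Suc n)"] B[of n] by simp
  have "uniformly_continuous_on (cball 0 (2 * B)) (F j)"
    by (rule compact_uniformly_continuous[OF continuous_on_subset[OF F_cont[OF j]]]) auto
  note uc = this[unfolded uniformly_continuous_on_sequentially, rule_format,
      of "\<lambda>n. avg (Suc n)" "\<lambda>n. th (Suc n) j"]
  have "\<forall>n. avg (Suc n) \<in> cball 0 (2 * B)" "\<forall>n. th (Suc n) j \<in> cball 0 (2 * B)"
  proof -
    have "0 \<le> B" using norm_ge_zero[of "th (Suc 0) j"] B(1)[of 0] by linarith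
    then have "norm (th (Suc n) j) \<le> 2 * B" for n using B(1)[of n] by linarith
    then show "\<forall>n. avg (Suc n) \<in> cball 0 (2 * B)" "\<forall>n. th (Suc n) j \<in> cball 0 (2 * B)"
      using avg by auto
  qed
  moreover have "(\<lambda>n. dist (avg (Suc n)) (th (Suc n) j)) \<longlonglongrightarrow> 0"
    using local_minus_avg_tendsto_0[OF j] by (simp add: dist_norm norm_minus_commute tendsto_norm_zero_iff)
  ultimately have "(\<lambda>n. dist (F j (avg (Suc n))) (F j (th (Suc n) j))) \<longlonglongrightarrow> 0"
    using uc by blast
  then show ?thesis by (simp add: dist_real_def tendsto_rabs_zero_iff)
qed

definition primal_err :: "nat \<Rightarrow> real" where
  "primal_err n = (\<Sum>j\<in>J. F j (avg (Suc n)) - F j (th (Suc n) j))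
     + \<nu> * (\<Sum>j\<in>J. inner (\<zeta> n j) (th (Suc n) j - avg (Suc n))) + real N * \<delta> n"

text \<open>Summing the minorants over the clients cancels the dual variables, since \<open>\<Sum>j. \<zeta> n j = 0\<close>.\<close>
lemma sum_F_avg_le: "(\<Sum>j\<in>J. F j (avg (Suc n))) \<le> (\<Sum>j\<in>J. F j u) + primal_err n"
proof -
  have "F j (th (Suc n) j) + \<nu> * inner (\<zeta> n j) u - \<nu> * inner (\<zeta> n j) (th (Suc n) j - avg (Suc n))
      - \<nu> * inner (\<zeta> n j) (avg (Suc n)) - \<delta> n \<le> F j u" if j: "j \<in> J" for j
  proof -
    have "0 \<le> \<nu> / 2 * (norm (u - th (Suc n) j))\<^sup>2" using nu_pos by simp
    then show ?thesis using minorant[OF j, of n u] by (simp add: inner_diff_right algebra_simps)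
  qed
  then have "(\<Sum>j\<in>J. F j (th (Suc n) j) + \<nu> * inner (\<zeta> n j) u
      - \<nu> * inner (\<zeta> n j) (th (Suc n) j - avg (Suc n)) - \<nu> * inner (\<zeta> n j) (avg (Suc n)) - \<delta> n)
      \<le> (\<Sum>j\<in>J. F j u)"
    by (rule sum_mono)
  moreover have "(\<Sum>j\<in>J. inner (\<zeta> n j) v) = 0" for v
    using sum_zeta[of n] by (simp flip: inner_sum_left)
  ultimately show ?thesis
    unfolding primal_err_def by (simp add: sum.distrib sum_subtractf flip: sum_distrib_left)
qed

lemma primal_err_tendsto_0: "primal_err \<longlonglongrightarrow> 0"
proof -
  obtain B where B: "\<And>n j. j \<in> J \<Longrightarrow> norm (\<zeta> n j) \<le> B" using zeta_bounded by blast
  have "(\<lambda>n. inner (\<zeta> n j) (th (Suc n) j - avg (Suc n))) \<longlonglongrightarrow> 0" if j: "j \<in> J" for j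
  proof (rule Lim_null_comparison)
    show "\<forall>\<^sub>F n in sequentially. norm (inner (\<zeta> n j) (th (Suc n) j - avg (Suc n)))
        \<le> B * norm (th (Suc n) j - avg (Suc n))"
    proof (intro always_eventually allI)
      fix n
      show "norm (inner (\<zeta> n j) (th (Suc n) j - avg (Suc n))) \<le> B * norm (th (Suc n) j - avg (Suc n))"
        using Cauchy_Schwarz_ineq2[of "\<zeta> n j" "th (Suc n) j - avg (Suc n)"]
          mult_right_mono[OF B[OF j, of n] norm_ge_zero[of "th (Suc n) j - avg (Suc n)"]]
        by simp
    qed
    show "(\<lambda>n. B * norm (th (Suc n) j - avg (Suc n))) \<longlonglongrightarrow> 0"
      using local_minus_avg_tendsto_0[OF j] by (intro tendsto_mult_right_zero) (simp add: tendsto_norm_zero_iff)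
  qed
  then have "(\<lambda>n. \<nu> * (\<Sum>j\<in>J. inner (\<zeta> n j) (th (Suc n) j - avg (Suc n)))) \<longlonglongrightarrow> 0"
    by (intro tendsto_mult_right_zero tendsto_null_sum) auto
  moreover have "(\<lambda>n. \<Sum>j\<in>J. F j (avg (Suc n)) - F j (th (Suc n) j)) \<longlonglongrightarrow> 0"
    using F_avg_minus_F_local_tendsto_0 by (intro tendsto_null_sum) auto
  moreover have "(\<lambda>n. real N * \<delta> n) \<longlonglongrightarrow> 0"
    using err_tendsto_0 by (rule tendsto_mult_right_zero)
  ultimately show ?thesis unfolding primal_err_def[abs_def] by (intro tendsto_add_zero)
qed

lemma eventually_avg_obj_le:
  assumes "\<eta> > 0"
  shows "\<forall>\<^sub>F n in sequentially. avg_obj N F (avg n) \<le> avg_obj N F u + \<eta>"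
proof -
  have N: "real N > 0" using N_pos by simp
  have "\<forall>\<^sub>F n in sequentially. primal_err n < real N * \<eta>"
    using order_tendstoD(2)[OF primal_err_tendsto_0] N assms by simp
  then have "\<forall>\<^sub>F n in sequentially. avg_obj N F (avg (Suc n)) \<le> avg_obj N F u + \<eta>"
  proof (rule eventually_mono)
    fix n assume "primal_err n < real N * \<eta>"
    then have "(\<Sum>j\<in>J. F j (avg (Suc n))) \<le> (\<Sum>j\<in>J. F j u) + real N * \<eta>"
      using sum_F_avg_le[of n u] by linarith
    then show "avg_obj N F (avg (Suc n)) \<le> avg_obj N F u + \<eta>"
      unfolding avg_obj_def using N by (simp add: field_simps)
  qed
  then show ?thesis
    unfolding eventually_sequentially_Suc[symmetric, of "\<lambda>n. avg_obj N F (avg n) \<le> avg_obj N F u + \<eta>"] .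
qed

end

section \<open>Tikhonov regularisation\<close>

lemma avg_obj_regul:
  assumes "N \<ge> 1"
  shows "avg_obj N (\<lambda>j. regul \<alpha> (f j)) \<theta> = avg_obj N f \<theta> + \<alpha> / 2 * (norm \<theta>)\<^sup>2"
proof -
  have "(\<Sum>j\<in>{1..N}. regul \<alpha> (f j) \<theta>) = (\<Sum>j\<in>{1..N}. f j \<theta>) + real N * (\<alpha> / 2 * (norm \<theta>)\<^sup>2)"
    by (simp add: regul_def sum.distrib)
  then show ?thesis using assms by (simp add: avg_obj_def ring_distribs)
qed

lemma dualfl_inexact_regul:
  fixes f :: "nat \<Rightarrow> 'a::euclidean_space \<Rightarrow> real"
  assumes "N \<ge> 1" "\<alpha> > 0" "\<gamma> > 0"
    and "\<forall>j\<in>{1..N}. continuous_on UNIV (f j)" "\<forall>j\<in>{1..N}. th 0 j = 0"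
    and "\<forall>n. \<forall>j\<in>{1..N}. dualfl_gap (regul \<alpha> (f j)) \<alpha> (dualfl_zeta 0 N th j n) (th (Suc n) j)
          \<le> ereal (1 / (real N * \<alpha> * (real n + 1) powr (4 + \<gamma>)))"
  shows "dualfl_inexact N (\<lambda>j. regul \<alpha> (f j)) \<alpha> th (\<lambda>n. 1 / (real N * \<alpha> * (real n + 1) powr (4 + \<gamma>)))"
proof
  show "continuous_on UNIV (regul \<alpha> (f j))" if "j \<in> {1..N}" for j
    unfolding regul_def[abs_def] using assms(4) that by (intro continuous_intros) auto
  have "summable (\<lambda>n. (real n + 1)\<^sup>2 / (real N * \<alpha> * (real n + 1) powr (4 + \<gamma>)))"
    using assms(3) by (intro summable_sq_div_powr) simp
  then show "summable (\<lambda>n. (real n + 1)\<^sup>2 * (1 / (real N * \<alpha> * (real n + 1) powr (4 + \<gamma>))))"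
    by (simp only: times_divide_eq_right mult_1_right)
qed (use assms in simp_all)

lemma dualfl_regul_eventually_le:
  fixes f :: "nat \<Rightarrow> 'a::euclidean_space \<Rightarrow> real"
  assumes "N \<ge> 1" "\<alpha> > 0" "\<gamma> > 0" "\<eta> > 0"
    and "\<forall>j\<in>{1..N}. continuous_on UNIV (f j)" "\<forall>j\<in>{1..N}. th 0 j = 0"
    and "\<forall>n. \<forall>j\<in>{1..N}. dualfl_gap (regul \<alpha> (f j)) \<alpha> (dualfl_zeta 0 N th j n) (th (Suc n) j)
          \<le> ereal (1 / (real N * \<alpha> * (real n + 1) powr (4 + \<gamma>)))"
  shows "\<forall>\<^sub>F n in sequentially.
    avg_obj N f (dualfl_avg N th n) \<le> avg_obj N f u + \<alpha> / 2 * (norm u)\<^sup>2 + \<eta>"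
proof -
  interpret dualfl_inexact N "\<lambda>j. regul \<alpha> (f j)" \<alpha> th
      "\<lambda>n. 1 / (real N * \<alpha> * (real n + 1) powr (4 + \<gamma>))"
    using assms by (intro dualfl_inexact_regul) auto
  show ?thesis
    using eventually_avg_obj_le[OF \<open>\<eta> > 0\<close>, of u]
  proof (rule eventually_mono)
    fix n
    assume "avg_obj N (\<lambda>j. regul \<alpha> (f j)) (avg n) \<le> avg_obj N (\<lambda>j. regul \<alpha> (f j)) u + \<eta>"
    moreover have "0 \<le> \<alpha> / 2 * (norm (avg n))\<^sup>2" using \<open>\<alpha> > 0\<close> by simp
    ultimately show "avg_obj N f (avg n) \<le> avg_obj N f u + \<alpha> / 2 * (norm u)\<^sup>2 + \<eta>"
      unfolding avg_obj_regul[OF \<open>N \<ge> 1\<close>] by linarith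
  qed
qed

theorem theorem4p1:
  fixes f :: "nat \<Rightarrow> 'a::euclidean_space \<Rightarrow> real"
    and N :: nat
    and \<theta>s :: 'a
    and \<gamma> :: real
    and th :: "real \<Rightarrow> nat \<Rightarrow> nat \<Rightarrow> 'a"
  assumes N_pos: "N \<ge> 1"
    and convex: "\<forall>j\<in>{1..N}. convex_on UNIV (f j)"
    and cont: "\<forall>j\<in>{1..N}. continuous_on UNIV (f j)"
    and coercive: "filterlim (avg_obj N f) at_top at_infinity"
    and minimizer: "\<forall>\<theta>. avg_obj N f \<theta>s \<le> avg_obj N f \<theta>"
    and gamma_pos: "\<gamma> > 0"
    and init: "\<forall>\<alpha>>0. \<forall>j\<in>{1..N}. th \<alpha> 0 j = 0"
    and inexact: "\<forall>\<alpha>>0. \<forall>n. \<forall>j\<in>{1..N}.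
        dualfl_gap (regul \<alpha> (f j)) \<alpha> (dualfl_zeta 0 N (th \<alpha>) j n) (th \<alpha> (Suc n) j)
          \<le> ereal (1 / (real N * \<alpha> * (real n + 1) powr (4 + \<gamma>)))"
  shows "\<forall>\<epsilon>>0. \<exists>\<alpha>0>0. \<forall>\<alpha>\<in>{0<..<\<alpha>0}. \<exists>n0. \<forall>n\<ge>n0.
           \<bar>avg_obj N f (dualfl_avg N (th \<alpha>) n) - avg_obj N f \<theta>s\<bar> < \<epsilon>"
proof (intro allI impI)
  fix \<epsilon> :: real
  assume "\<epsilon> > 0"
  define \<alpha>0 where "\<alpha>0 = \<epsilon> / ((norm \<theta>s)\<^sup>2 + 1)"
  have "\<exists>n0. \<forall>n\<ge>n0. \<bar>avg_obj N f (dualfl_avg N (th \<alpha>) n) - avg_obj N f \<theta>s\<bar> < \<epsilon>"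
    if "\<alpha> \<in> {0<..<\<alpha>0}" for \<alpha>
  proof -
    have "\<alpha> * ((norm \<theta>s)\<^sup>2 + 1) < \<epsilon>"
      using that by (simp add: \<alpha>0_def pos_less_divide_eq add_nonneg_pos)
    then have small: "\<alpha> / 2 * (norm \<theta>s)\<^sup>2 < \<epsilon> / 2" using that by (simp add: algebra_simps)
    have "\<forall>\<^sub>F n in sequentially.
        avg_obj N f (dualfl_avg N (th \<alpha>) n) \<le> avg_obj N f \<theta>s + \<alpha> / 2 * (norm \<theta>s)\<^sup>2 + \<epsilon> / 2"
      using that \<open>\<epsilon> > 0\<close> N_pos gamma_pos cont init inexact
      by (intro dualfl_regul_eventually_le[where \<gamma> = \<gamma>]) auto
    then obtain n0 where "\<And>n. n \<ge> n0 \<Longrightarrow>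
        avg_obj N f (dualfl_avg N (th \<alpha>) n) \<le> avg_obj N f \<theta>s + \<alpha> / 2 * (norm \<theta>s)\<^sup>2 + \<epsilon> / 2"
      unfolding eventually_sequentially by blast
    with small minimizer show ?thesis by (intro exI[of _ n0]) (force simp: abs_less_iff)
  qed
  moreover have "\<alpha>0 > 0"
    unfolding \<alpha>0_def by (intro divide_pos_pos \<open>\<epsilon> > 0\<close> add_nonneg_pos) auto
  ultimately show "\<exists>\<alpha>0>0. \<forall>\<alpha>\<in>{0<..<\<alpha>0}. \<exists>n0. \<forall>n\<ge>n0.
      \<bar>avg_obj N f (dualfl_avg N (th \<alpha>) n) - avg_obj N f \<theta>s\<bar> < \<epsilon>"
    by blast
qed
end
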